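(* Let $\mathcal{A}$ be a finite set of at least 3 alternatives, $N\ge2$, $i\in\{1,\dots,N\}$, and $w:\underline{\mathcal{P}}^N\to\underline{\mathcal{P}}$ satisfy Unanimity, IIA and Non-Dictatorship. Then the self-reference system $(w,\Omega_i)$ with valid elements $\mathcal{P}^N$ is quasi-Gödelian with respect to $\Upsilon_i=(\mathbf{c},\dots,\mathbf{i},\dots,\mathbf{c})$: there exists $q\in\mathcal{P}^N$ with $q\le\neg(\Upsilon_i\ast q)$ such that $(\Upsilon_i,q)$ does not satisfy both quasi-consistency $q\le\neg(\Upsilon_i\ast\neg q)$ and quasi-completeness ($\neg(\Upsilon_i\ast q)$ and $\neg(\Upsilon_i\ast\neg q)$ are inconsistent).
   Context: $\mathcal{P}$: weak orders on $\mathcal{A}$; $\underline{\mathcal{P}}=\mathcal{P}\cup\{\mathbf{c}\}$, $\mathbf{c}$ a new element (contradictory preference cycle). Strictness order: $r\le s$ iff every strict preference of $s$ is one of $r$; $\mathbf{c}$ bottom, $\mathbf{i}$ (total indifference) top; $\wedge,\vee$ meet and join; negation $\neg\mathbf{c}=\mathbf{i}$, $\neg\mathbf{i}=\mathbf{c}$, and otherwise $\neg r$ reverses all strict preferences of $r$. On $\underline{\mathcal{P}}^N$ all operations and the order are coordinatewise; $\mathcal{P}^N$ are the valid profiles, and $p,q$ are inconsistent if $p_j\wedge q_j=\mathbf{c}$ for some $j$. $\Omega_i((p_1,\dots,p_N),r)=(\mathbf{c},\dots,p_i\wedge r,\dots,\mathbf{c})$ (position $i$), and $e\ast f:=\Omega_i(e,w(f))$;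 $\neg\Upsilon\ast d$ means $\neg(\Upsilon\ast d)$. Unanimity: if all individuals of $p\in\mathcal{P}^N$ strictly prefer $a$ to $b$, so does $w(p)$. IIA: the aggregate comparison of $a,b$ depends only on individuals' comparisons of $a,b$ (for these axioms $\mathbf{c}$ is read as a preference cycle, i.e. an intransitive assignment of pairwise comparisons). Dictator at $j$: for all $p\in\mathcal{P}^N$, $w(p)=\mathbf{c}\Rightarrow p_j=\mathbf{i}$ and $p_j\ne\mathbf{i}\Rightarrow w(p)\le p_j$. Non-Dictatorship: no dictator. *)

theory Defs
  imports Main
begin

text \<open>A weak order on the alternatives 'a: a total (complete) and transitive
relation; R a b means "a is weakly preferred to b".\<close>

definition weak_order :: "('a \<Rightarrow> 'a \<Rightarrow> bool) \<Rightarrow> bool" where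
  "weak_order R \<longleftrightarrow> (\<forall>a b. R a b \<or> R b a) \<and> (\<forall>a b c. R a b \<longrightarrow> R b c \<longrightarrow> R a c)"

typedef 'a worder = "{R :: 'a \<Rightarrow> 'a \<Rightarrow> bool. weak_order R}"
  by (rule exI[of _ "\<lambda>_ _. True"]) (simp add: weak_order_def)

text \<open>The extended set: Cyc is the contradictory element c, WO r a weak order.\<close>
datatype 'a pref = Cyc | WO "'a worder"

text \<open>Strict preferences; c is treated as containing every strict preference,
which makes it the bottom of the strictness order.\<close>
fun strict :: "'a pref \<Rightarrow> 'a \<Rightarrow> 'a \<Rightarrow> bool" where
  "strict Cyc a b = True"
| "strict (WO r) a b = (Rep_worder r a b \<and> \<not> Rep_worder r b a)"

definition ple :: "'a pref \<Rightarrow> 'a pref \<Rightarrow> bool" where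
  "ple r s \<longleftrightarrow> (\<forall>a b. strict s a b \<longrightarrow> strict r a b)"

definition Ind :: "'a pref" where
  "Ind = WO (Abs_worder (\<lambda>_ _. True))"

definition pmeet :: "'a pref \<Rightarrow> 'a pref \<Rightarrow> 'a pref" where
  "pmeet r s = (THE x. ple x r \<and> ple x s \<and> (\<forall>y. ple y r \<and> ple y s \<longrightarrow> ple y x))"

definition pneg :: "'a pref \<Rightarrow> 'a pref" where
  "pneg r = (if r = Cyc then Ind
             else if r = Ind then Cyc
             else (case r of WO R \<Rightarrow> WO (Abs_worder (\<lambda>a b. Rep_worder R b a)) | Cyc \<Rightarrow> Cyc))"

type_synonym ('n, 'a) profile = "'n \<Rightarrow> 'a pref"

definition valid :: "('n, 'a) profile \<Rightarrow> bool" where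
  "valid p \<longleftrightarrow> (\<forall>j. p j \<noteq> Cyc)"

definition prof_le :: "('n, 'a) profile \<Rightarrow> ('n, 'a) profile \<Rightarrow> bool" where
  "prof_le p q \<longleftrightarrow> (\<forall>j. ple (p j) (q j))"

definition prof_neg :: "('n, 'a) profile \<Rightarrow> ('n, 'a) profile" where
  "prof_neg p = (\<lambda>j. pneg (p j))"

definition inconsistent :: "('n, 'a) profile \<Rightarrow> ('n, 'a) profile \<Rightarrow> bool" where
  "inconsistent p q \<longleftrightarrow> (\<exists>j. pmeet (p j) (q j) = Cyc)"

definition Omega :: "'n \<Rightarrow> ('n, 'a) profile \<Rightarrow> 'a pref \<Rightarrow> ('n, 'a) profile" where
  "Omega i e r = (\<lambda>j. if j = i then pmeet (e i) r else Cyc)"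

definition star :: "(('n, 'a) profile \<Rightarrow> 'a pref) \<Rightarrow> 'n \<Rightarrow> ('n, 'a) profile \<Rightarrow> ('n, 'a) profile
                    \<Rightarrow> ('n, 'a) profile" where
  "star w i e f = Omega i e (w f)"

definition Upsilon :: "'n \<Rightarrow> ('n, 'a) profile" where
  "Upsilon i = (\<lambda>j. if j = i then Ind else Cyc)"

text \<open>For Unanimity and IIA, c is read as a preference cycle: w is induced by an
aggregation F of complete pairwise comparisons, and w p = c exactly when F p is
intransitive (otherwise w p is the weak order F p).\<close>

definition induced_by :: "(('n, 'a) profile \<Rightarrow> 'a pref) \<Rightarrow> (('n, 'a) profile \<Rightarrow> 'a \<Rightarrow> 'a \<Rightarrow> bool) \<Rightarrow> bool" where
  "induced_by w F \<longleftrightarrow> (\<forall>p. valid p \<longrightarrow>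
      (\<forall>a b. F p a b \<or> F p b a) \<and>
      (if (\<forall>a b c. F p a b \<longrightarrow> F p b c \<longrightarrow> F p a c)
       then w p = WO (Abs_worder (F p)) else w p = Cyc))"

definition unanimity_rel :: "(('n, 'a) profile \<Rightarrow> 'a \<Rightarrow> 'a \<Rightarrow> bool) \<Rightarrow> bool" where
  "unanimity_rel F \<longleftrightarrow> (\<forall>p a b. valid p \<longrightarrow> (\<forall>j. strict (p j) a b) \<longrightarrow> F p a b \<and> \<not> F p b a)"

text \<open>Individual weak comparison (only used on valid profiles).\<close>
fun wpref :: "'a pref \<Rightarrow> 'a \<Rightarrow> 'a \<Rightarrow> bool" where
  "wpref Cyc a b = False"
| "wpref (WO r) a b = Rep_worder r a b"

definition iia_rel :: "(('n, 'a) profile \<Rightarrow> 'a \<Rightarrow> 'a \<Rightarrow> bool) \<Rightarrow> bool" where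
  "iia_rel F \<longleftrightarrow> (\<forall>p q a b. valid p \<longrightarrow> valid q \<longrightarrow>
      (\<forall>j. wpref (p j) a b = wpref (q j) a b \<and> wpref (p j) b a = wpref (q j) b a) \<longrightarrow>
      F p a b = F q a b \<and> F p b a = F q b a)"

definition unanimity_iia :: "(('n, 'a) profile \<Rightarrow> 'a pref) \<Rightarrow> bool" where
  "unanimity_iia w \<longleftrightarrow> (\<exists>F. induced_by w F \<and> unanimity_rel F \<and> iia_rel F)"

definition dictator :: "(('n, 'a) profile \<Rightarrow> 'a pref) \<Rightarrow> 'n \<Rightarrow> bool" where
  "dictator w j \<longleftrightarrow> (\<forall>p. valid p \<longrightarrow>
      (w p = Cyc \<longrightarrow> p j = Ind) \<and> (p j \<noteq> Ind \<longrightarrow> ple (w p) (p j)))"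

definition non_dictatorship :: "(('n, 'a) profile \<Rightarrow> 'a pref) \<Rightarrow> bool" where
  "non_dictatorship w \<longleftrightarrow> \<not> (\<exists>j. dictator w j)"

definition quasi_consistent :: "(('n, 'a) profile \<Rightarrow> 'a pref) \<Rightarrow> 'n \<Rightarrow> ('n, 'a) profile \<Rightarrow> ('n, 'a) profile \<Rightarrow> bool" where
  "quasi_consistent w i U q \<longleftrightarrow> prof_le q (prof_neg (star w i U (prof_neg q)))"

definition quasi_complete :: "(('n, 'a) profile \<Rightarrow> 'a pref) \<Rightarrow> 'n \<Rightarrow> ('n, 'a) profile \<Rightarrow> ('n, 'a) profile \<Rightarrow> bool" where
  "quasi_complete w i U q \<longleftrightarrow>
     inconsistent (prof_neg (star w i U q)) (prof_neg (star w i U (prof_neg q)))"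

definition quasi_goedelian :: "(('n, 'a) profile \<Rightarrow> 'a pref) \<Rightarrow> 'n \<Rightarrow> ('n, 'a) profile \<Rightarrow> bool" where
  "quasi_goedelian w i U \<longleftrightarrow> (\<exists>q. valid q \<and> prof_le q (prof_neg (star w i U q)) \<and>
      \<not> (quasi_consistent w i U q \<and> quasi_complete w i U q))"

end

theory Submission
  imports Defs
begin

text \<open>If \<open>w\<close> returned the cycle \<open>c\<close> on no valid profile, it would be a social welfare
  function satisfying Unanimity and IIA, and Arrow's theorem would make some voter a dictator.
  Arrow's theorem is proved with decisive coalitions: a coalition that is almost decisive for one
  pair is decisive for all pairs, of two disjoint parts of a decisive coalition one is again
  decisive, hence some single voter is decisive. It holds for any finite number of voters.

  So \<open>w q = c\<close> for some valid \<open>q\<close>. Then \<open>\<Upsilon>\<^sub>i \<ast> q\<close> is constantly \<open>c\<close>, whose negation is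
  constantly \<open>i\<close> and lies above \<open>q\<close>. Quasi-completeness of \<open>(\<Upsilon>\<^sub>i, q)\<close> forces
  \<open>w (\<not> q) = i\<close>, and then quasi-consistency asks for \<open>q\<^sub>i \<le> \<not> i = c\<close>, which fails
  because \<open>q\<^sub>i\<close> is a weak order.\<close>

lemma weak_order_Rep_worder: "weak_order (Rep_worder r)"
  using Rep_worder[of r] by simp

lemma Rep_worder_Abs_worder: "weak_order R \<Longrightarrow> Rep_worder (Abs_worder R) = R"
  by (simp add: Abs_worder_inverse)

lemma wpref_total: "r \<noteq> Cyc \<Longrightarrow> wpref r a b \<or> wpref r b a"
proof (cases r)
  case (WO s)
  then show ?thesis using weak_order_Rep_worder[of s] by (auto simp: weak_order_def)
qed simp

lemma strict_iff_wpref: "r \<noteq> Cyc \<Longrightarrow> strict r a b \<longleftrightarrow> wpref r a b \<and> \<not> wpref r b a"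
  by (cases r) auto

lemma wpref_eq_if_strict:
  assumes "r \<noteq> Cyc" "s \<noteq> Cyc" "strict r a b" "strict s a b"
  shows "wpref r a b = wpref s a b \<and> wpref r b a = wpref s b a"
  using assms by (simp add: strict_iff_wpref)

lemma valid_imp_neq_Cyc: "valid p \<Longrightarrow> p j \<noteq> Cyc"
  by (simp add: valid_def)

lemma strict_refl_iff: "strict r a a \<longleftrightarrow> r = Cyc"
  by (cases r) auto

lemma Rep_worder_Ind: "Rep_worder (Abs_worder (\<lambda>_ _. True)) = (\<lambda>_ _. True)"
  by (rule Rep_worder_Abs_worder) (simp add: weak_order_def)

lemma strict_Ind [simp]: "\<not> strict Ind a b"
  by (simp add: Ind_def Rep_worder_Ind)

lemma Ind_neq_Cyc [simp]: "Ind \<noteq> Cyc"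
  by (simp add: Ind_def)

lemma strict_inject: "strict r = strict s \<Longrightarrow> r = s"
proof (cases r; cases s)
  fix r' s' assume eq: "strict r = strict s" and r: "r = WO r'" and s: "s = WO s'"
  have "Rep_worder r' a b = Rep_worder s' a b" for a b
    using fun_cong[OF fun_cong[OF eq, of b], of a] wpref_total[of r a b] wpref_total[of s a b] r s
    by auto
  then show "r = s" using r s Rep_worder_inject by fastforce
qed (metis strict_refl_iff pref.distinct)+

lemma ple_antisym: "ple r s \<Longrightarrow> ple s r \<Longrightarrow> r = s"
  unfolding ple_def by (intro strict_inject ext) blast

lemma ple_refl: "ple r r"
  by (simp add: ple_def)

lemma ple_Ind: "ple r Ind"
  by (simp add: ple_def)

lemma pmeet_Ind: "pmeet Ind r = r"
  unfolding pmeet_def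
proof (rule the_equality)
  fix x assume x: "ple x Ind \<and> ple x r \<and> (\<forall>y. ple y Ind \<and> ple y r \<longrightarrow> ple y x)"
  then have "ple r x" using ple_refl ple_Ind by blast
  then show "x = r" using x ple_antisym by blast
qed (simp add: ple_refl ple_Ind)

lemma pneg_Cyc [simp]: "pneg Cyc = Ind"
  by (simp add: pneg_def)

lemma pneg_Ind [simp]: "pneg Ind = Cyc"
  by (simp add: pneg_def)

lemma pneg_eq_Cyc_iff: "pneg r = Cyc \<longleftrightarrow> r = Ind"
  by (auto simp: pneg_def split: if_splits pref.splits)

lemma ple_Cyc_iff: "ple r Cyc \<longleftrightarrow> r = Cyc"
  by (metis ple_def strict.simps(1) strict_refl_iff)

definition ranking :: "('a \<Rightarrow> nat) \<Rightarrow> 'a pref" where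
  "ranking f = WO (Abs_worder (\<lambda>a b. f b \<le> f a))"

lemma Rep_worder_ranking: "Rep_worder (Abs_worder (\<lambda>a b. f b \<le> f a)) = (\<lambda>a b. (f b :: nat) \<le> f a)"
  by (rule Rep_worder_Abs_worder) (auto simp: weak_order_def)

lemma strict_ranking [simp]: "strict (ranking f) a b \<longleftrightarrow> f b < f a"
  by (auto simp: ranking_def Rep_worder_ranking)

lemma wpref_ranking [simp]: "wpref (ranking f) a b \<longleftrightarrow> f b \<le> f a"
  by (simp add: ranking_def Rep_worder_ranking)

lemma valid_ranking [simp]: "valid (\<lambda>j. ranking (f j))"
  by (simp add: valid_def ranking_def)

definition ranking3 :: "'a \<Rightarrow> 'a \<Rightarrow> 'a \<Rightarrow> 'a pref" where
  "ranking3 x y z = ranking (\<lambda>v. if v = x then 3 else if v = y then 2 else if v = z then 1 else 0)"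

text \<open>Every voter keeps their comparison of \<open>x\<close> and \<open>y\<close> from \<open>p\<close>, with \<open>x\<close> and \<open>y\<close>
  ranked 2 or 4; any other alternative \<open>z\<close> gets rank \<open>g j z\<close>, so rank 3 places it strictly
  between a strictly ordered pair, 5 above and 0 below both.\<close>

definition keep_pair :: "('n, 'a) profile \<Rightarrow> 'a \<Rightarrow> 'a \<Rightarrow> ('n \<Rightarrow> 'a \<Rightarrow> nat) \<Rightarrow> ('n, 'a) profile" where
  "keep_pair p x y g = (\<lambda>j. ranking (\<lambda>z.
     if z = x then (if wpref (p j) x y then 4 else 2)
     else if z = y then (if wpref (p j) y x then 4 else 2)
     else g j z))"

lemma valid_keep_pair [simp]: "valid (keep_pair p x y g)"
  by (simp add: keep_pair_def)

lemma wpref_keep_pair: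
  assumes "valid p" "x \<noteq> y"
  shows "wpref (keep_pair p x y g j) x y = wpref (p j) x y
    \<and> wpref (keep_pair p x y g j) y x = wpref (p j) y x"
  using wpref_total[OF valid_imp_neq_Cyc[OF assms(1)], of j x y] assms(2)
  by (auto simp: keep_pair_def)

section \<open>Arrow's theorem\<close>

locale arrow_swf =
  fixes F :: "('n::finite, 'a) profile \<Rightarrow> 'a \<Rightarrow> 'a \<Rightarrow> bool"
  assumes card_alternatives: "3 \<le> card (UNIV :: 'a set)"
    and total: "valid p \<Longrightarrow> F p a b \<or> F p b a"
    and transitive: "valid p \<Longrightarrow> F p a b \<Longrightarrow> F p b c \<Longrightarrow> F p a c"
    and unanimity: "valid p \<Longrightarrow> (\<forall>j. strict (p j) a b) \<Longrightarrow> F p a b \<and> \<not> F p b a"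
    and iia: "valid p \<Longrightarrow> valid q \<Longrightarrow>
      (\<forall>j. wpref (p j) a b = wpref (q j) a b \<and> wpref (p j) b a = wpref (q j) b a) \<Longrightarrow>
      F p a b = F q a b \<and> F p b a = F q b a"
begin

lemma third_alternative: "\<exists>c :: 'a. c \<noteq> x \<and> c \<noteq> y"
proof (rule ccontr)
  assume "\<not> ?thesis"
  then have "UNIV \<subseteq> {x, y}" by auto
  then have "card (UNIV :: 'a set) \<le> card {x, y}" by (intro card_mono) auto
  also have "\<dots> \<le> 2" by (cases "x = y") auto
  finally show False using card_alternatives by simp
qed

lemma F_keep_pair:
  assumes "valid p" "x \<noteq> y"
  shows "F (keep_pair p x y g) x y = F p x y \<and> F (keep_pair p x y g) y x = F p y x"
  using iia[OF valid_keep_pair assms(1)] wpref_keep_pair[OF assms] by blast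

definition decisive :: "'n set \<Rightarrow> 'a \<Rightarrow> 'a \<Rightarrow> bool" where
  "decisive S a b \<longleftrightarrow>
     (\<forall>p. valid p \<longrightarrow> (\<forall>j\<in>S. strict (p j) a b) \<longrightarrow> F p a b \<and> \<not> F p b a)"

definition almost_decisive :: "'n set \<Rightarrow> 'a \<Rightarrow> 'a \<Rightarrow> bool" where
  "almost_decisive S a b \<longleftrightarrow>
     (\<forall>p. valid p \<longrightarrow> (\<forall>j\<in>S. strict (p j) a b) \<longrightarrow> (\<forall>j. j \<notin> S \<longrightarrow> strict (p j) b a) \<longrightarrow>
        F p a b \<and> \<not> F p b a)"

definition decisive_coalition :: "'n set \<Rightarrow> bool" where
  "decisive_coalition S \<longleftrightarrow> (\<forall>a b. a \<noteq> b \<longrightarrow> decisive S a b)"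

lemma almost_decisive_if_decisive: "decisive S a b \<Longrightarrow> almost_decisive S a b"
  by (auto simp: decisive_def almost_decisive_def)

lemma almost_decisive_if_witness:
  assumes p0: "valid p0" "\<forall>j\<in>S. strict (p0 j) a b" "\<forall>j. j \<notin> S \<longrightarrow> strict (p0 j) b a"
    and F: "F p0 a b \<and> \<not> F p0 b a"
  shows "almost_decisive S a b"
  unfolding almost_decisive_def
proof (intro allI impI)
  fix p assume p: "valid p" "\<forall>j\<in>S. strict (p j) a b" "\<forall>j. j \<notin> S \<longrightarrow> strict (p j) b a"
  have "wpref (p j) a b = wpref (p0 j) a b \<and> wpref (p j) b a = wpref (p0 j) b a" for j
    using wpref_eq_if_strict[OF valid_imp_neq_Cyc[OF p(1)] valid_imp_neq_Cyc[OF p0(1)]] p p0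
    by (cases "j \<in> S") auto
  then show "F p a b \<and> \<not> F p b a"
    using iia[OF p(1) p0(1)] F by metis
qed

lemma decisive_if_almost_decisive_snd:
  assumes W: "almost_decisive S a b" and ne: "a \<noteq> b" "c \<noteq> a" "c \<noteq> b"
  shows "decisive S a c"
  unfolding decisive_def
proof (intro allI impI)
  fix p assume p: "valid p" "\<forall>j\<in>S. strict (p j) a c"
  txt \<open>In \<open>q\<close> the coalition ranks \<open>a\<close> over \<open>b\<close> over \<open>c\<close>, everybody else puts \<open>b\<close> on top.\<close>
  define q where "q = keep_pair p a c (\<lambda>j z. if j \<in> S then 3 else 5)"
  have S: "wpref (p j) a c \<and> \<not> wpref (p j) c a" if "j \<in> S" for j
    using p that strict_iff_wpref[OF valid_imp_neq_Cyc[OF p(1)]] by blast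
  have "F q a b \<and> \<not> F q b a"
    using W S ne unfolding almost_decisive_def by (auto simp: q_def keep_pair_def)
  moreover have "F q b c \<and> \<not> F q c b"
    using unanimity[of q b c] S ne by (auto simp: q_def keep_pair_def)
  ultimately have "F q a c \<and> \<not> F q c a"
    using transitive[OF valid_keep_pair] unfolding q_def by blast
  then show "F p a c \<and> \<not> F p c a"
    using F_keep_pair[OF p(1)] ne unfolding q_def by metis
qed

lemma decisive_if_almost_decisive_fst:
  assumes W: "almost_decisive S a b" and ne: "a \<noteq> b" "c \<noteq> a" "c \<noteq> b"
  shows "decisive S c b"
  unfolding decisive_def
proof (intro allI impI)
  fix p assume p: "valid p" "\<forall>j\<in>S. strict (p j) c b"
  txt \<open>In \<open>q\<close> the coalition ranks \<open>c\<close> over \<open>a\<close> over \<open>b\<close>, everybody else puts \<open>a\<close> at the bottom.\<close>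
  define q where "q = keep_pair p c b (\<lambda>j z. if j \<in> S then 3 else 0)"
  have S: "wpref (p j) c b \<and> \<not> wpref (p j) b c" if "j \<in> S" for j
    using p that strict_iff_wpref[OF valid_imp_neq_Cyc[OF p(1)]] by blast
  have "F q a b \<and> \<not> F q b a"
    using W S ne unfolding almost_decisive_def by (auto simp: q_def keep_pair_def)
  moreover have "F q c a \<and> \<not> F q a c"
    using unanimity[of q c a] S ne by (auto simp: q_def keep_pair_def)
  ultimately have "F q c b \<and> \<not> F q b c"
    using transitive[OF valid_keep_pair] unfolding q_def by blast
  then show "F p c b \<and> \<not> F p b c"
    using F_keep_pair[OF p(1)] ne unfolding q_def by metis
qed

lemma decisive_coalition_if_almost_decisive:
  assumes W: "almost_decisive S a b" and ab: "a \<noteq> b"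
  shows "decisive_coalition S"
proof -
  have from_a: "decisive S a c" if "c \<noteq> a" for c
  proof (cases "c = b")
    case True
    obtain d where "d \<noteq> a" "d \<noteq> b" using third_alternative by blast
    then show ?thesis
      using decisive_if_almost_decisive_snd[OF almost_decisive_if_decisive
          [OF decisive_if_almost_decisive_snd[OF W ab]]] True ab by metis
  next
    case False
    then show ?thesis using decisive_if_almost_decisive_snd[OF W ab] that by blast
  qed
  show ?thesis
    unfolding decisive_coalition_def
  proof (intro allI impI)
    fix x y :: 'a assume xy: "x \<noteq> y"
    consider "x = a" | "x \<noteq> a" "y \<noteq> a" | "y = a" by blast
    then show "decisive S x y"
    proof cases
      case 1
      then show ?thesis using from_a[of y] xy by simp
    next
      case 2
      then show ?thesis
        using decisive_if_almost_decisive_fst[OF almost_decisive_if_decisive[OF from_a]] xy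
        by blast
    next
      case 3
      obtain c where c: "c \<noteq> x" "c \<noteq> a" using third_alternative by blast
      then have "decisive S x c"
        using decisive_if_almost_decisive_fst[OF almost_decisive_if_decisive[OF from_a]] xy 3
        by blast
      then show ?thesis
        using decisive_if_almost_decisive_snd[OF almost_decisive_if_decisive, of S x c a] c xy 3
        by auto
    qed
  qed
qed

lemma decisive_coalition_split:
  assumes S: "decisive_coalition (S \<union> T)" and disj: "S \<inter> T = {}"
  shows "decisive_coalition S \<or> decisive_coalition T"
proof -
  obtain a b :: 'a where ab: "a \<noteq> b" using third_alternative by blast
  obtain c where c: "c \<noteq> a" "c \<noteq> b" using third_alternative by blast
  txt \<open>Only \<open>S\<close> puts \<open>a\<close> above \<open>c\<close>, and only \<open>T\<close> puts \<open>c\<close> above \<open>b\<close>.\<close>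
  define p0 :: "('n, 'a) profile" where
    "p0 = (\<lambda>j. if j \<in> S then ranking3 a b c else if j \<in> T then ranking3 c a b else ranking3 b c a)"
  have v0: "valid p0" by (simp add: p0_def valid_def ranking3_def ranking_def)
  have "\<forall>j\<in>S \<union> T. strict (p0 j) a b"
    using ab c by (auto simp: p0_def ranking3_def)
  then have Fab: "F p0 a b \<and> \<not> F p0 b a"
    using S ab v0 unfolding decisive_coalition_def decisive_def by blast
  show ?thesis
  proof (cases "F p0 a c \<and> \<not> F p0 c a")
    case True
    have "almost_decisive S a c"
      by (rule almost_decisive_if_witness[OF v0 _ _ True])
        (use ab c disj in \<open>auto simp: p0_def ranking3_def\<close>)
    then show ?thesis using decisive_coalition_if_almost_decisive c by blast
  next
    case False
    then have Fcb: "F p0 c b \<and> \<not> F p0 b c"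
      using Fab total[OF v0] transitive[OF v0] by blast
    have "almost_decisive T c b"
      by (rule almost_decisive_if_witness[OF v0 _ _ Fcb])
        (use ab c disj in \<open>auto simp: p0_def ranking3_def\<close>)
    then show ?thesis using decisive_coalition_if_almost_decisive c by blast
  qed
qed

lemma decisive_coalition_nonempty: "decisive_coalition S \<Longrightarrow> S \<noteq> {}"
proof
  assume S: "decisive_coalition S" "S = {}"
  obtain a b :: 'a where ab: "a \<noteq> b" using third_alternative by blast
  define p :: "('n, 'a) profile" where "p = (\<lambda>j. ranking (\<lambda>z. if z = b then 1 else 0))"
  have "F p a b" using S ab unfolding decisive_coalition_def decisive_def p_def by simp
  moreover have "\<not> F p a b" using unanimity[of p b a] ab by (simp add: p_def)
  ultimately show False by contradiction
qed

lemma decisive_coalition_UNIV: "decisive_coalition UNIV"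
  unfolding decisive_coalition_def decisive_def using unanimity by blast

lemma decisive_coalition_singleton: "\<exists>d. decisive_coalition {d}"
proof -
  have "decisive_coalition S \<Longrightarrow> \<exists>d. decisive_coalition {d}" for S :: "'n set"
  proof (induction S rule: finite_psubset_induct[OF finite])
    case (1 S)
    obtain d where d: "d \<in> S" using decisive_coalition_nonempty[OF "1.prems"] by blast
    have "decisive_coalition ({d} \<union> (S - {d}))" using "1.prems" d by (simp add: insert_absorb)
    then have "decisive_coalition {d} \<or> decisive_coalition (S - {d})"
      by (rule decisive_coalition_split) blast
    then show ?case using "1.IH"[of "S - {d}"] d by blast
  qed
  then show ?thesis using decisive_coalition_UNIV by blast
qed

lemma dictator_exists: "\<exists>d. \<forall>p a b. valid p \<longrightarrow> strict (p d) a b \<longrightarrow> F p a b \<and> \<not> F p b a"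
proof -
  obtain d where d: "decisive_coalition {d}" using decisive_coalition_singleton by blast
  have "F p a b \<and> \<not> F p b a" if "valid p" "strict (p d) a b" for p a b
  proof -
    have "a \<noteq> b" using that strict_refl_iff valid_imp_neq_Cyc by metis
    then show ?thesis using d that unfolding decisive_coalition_def decisive_def by blast
  qed
  then show ?thesis by blast
qed

end

lemma dictator_if_never_Cyc:
  fixes w :: "('n::finite, 'a) profile \<Rightarrow> 'a pref"
  assumes card: "3 \<le> card (UNIV :: 'a set)" and "unanimity_iia w"
    and never_Cyc: "\<And>p. valid p \<Longrightarrow> w p \<noteq> Cyc"
  shows "\<exists>d. dictator w d"
proof -
  obtain F where F: "induced_by w F" "unanimity_rel F" "iia_rel F"
    using \<open>unanimity_iia w\<close> unfolding unanimity_iia_def by blast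
  have total: "F p a b \<or> F p b a" if "valid p" for p a b
    using F(1) that unfolding induced_by_def by blast
  have F_weak_order: "weak_order (F p)" and w_eq: "w p = WO (Abs_worder (F p))" if "valid p" for p
    using F(1) never_Cyc[OF that] that total[OF that] unfolding induced_by_def weak_order_def
    by metis+
  interpret arrow_swf F
    using card total F_weak_order[unfolded weak_order_def] F(2,3)[unfolded unanimity_rel_def iia_rel_def]
    by unfold_locales blast+
  obtain d where d: "\<And>p a b. valid p \<Longrightarrow> strict (p d) a b \<Longrightarrow> F p a b \<and> \<not> F p b a"
    using dictator_exists by blast
  have "strict (w p) a b \<longleftrightarrow> F p a b \<and> \<not> F p b a" if "valid p" for p a b
    by (simp add: w_eq[OF that] Rep_worder_Abs_worder[OF F_weak_order[OF that]])
  then have "dictator w d"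
    unfolding dictator_def ple_def using d never_Cyc by blast
  then show ?thesis ..
qed

section \<open>The self-reference system \<open>(w, \<Omega>\<^sub>i)\<close>\<close>

lemma star_Upsilon: "star w i (Upsilon i) f = (\<lambda>j. if j = i then w f else Cyc)"
  by (auto simp: star_def Omega_def Upsilon_def pmeet_Ind)

lemma quasi_goedelian_if_cyclic:
  assumes q: "valid q" "w q = Cyc"
  shows "quasi_goedelian w i (Upsilon i)"
proof -
  have below: "prof_le q (prof_neg (star w i (Upsilon i) q))"
    by (simp add: star_Upsilon q(2) prof_le_def prof_neg_def ple_def)
  have complete_iff: "quasi_complete w i (Upsilon i) q \<longleftrightarrow> w (prof_neg q) = Ind"
    by (simp add: quasi_complete_def inconsistent_def star_Upsilon q(2) prof_neg_def pmeet_Ind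
        pneg_eq_Cyc_iff)
  have "\<not> quasi_consistent w i (Upsilon i) q" if "w (prof_neg q) = Ind"
  proof
    assume "quasi_consistent w i (Upsilon i) q"
    then have "ple (q i) (pneg (star w i (Upsilon i) (prof_neg q) i))"
      unfolding quasi_consistent_def prof_le_def prof_neg_def by blast
    then have "ple (q i) (pneg (w (prof_neg q)))"
      by (simp add: star_Upsilon)
    then show False using that valid_imp_neq_Cyc[OF q(1)] by (simp add: ple_Cyc_iff)
  qed
  then show ?thesis
    using q(1) below complete_iff unfolding quasi_goedelian_def by blast
qed

theorem theorem11:
  fixes w :: "('n::finite, 'a::finite) profile \<Rightarrow> 'a pref" and i :: 'n
  assumes "card (UNIV :: 'a set) \<ge> 3"
    and "card (UNIV :: 'n set) \<ge> 2"
    and "unanimity_iia w"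
    and "non_dictatorship w"
  shows "quasi_goedelian w i (Upsilon i)"
proof -
  obtain q where "valid q" "w q = Cyc"
    using dictator_if_never_Cyc[OF assms(1,3)] assms(4) unfolding non_dictatorship_def by blast
  then show ?thesis by (rule quasi_goedelian_if_cyclic)
qed

end
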